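(* Let $f:\mathbb{R}^{n_x}\to\mathbb{R}^{n_x}$ be differentiable with Jacobian $F_x$, $L:\mathbb{R}^{n_x}\to\mathbb{R}^{n_x\times n_\beta}$, $Q$ an $n_\beta\times n_\beta$ diffusion matrix, $\overline{x}_a\in\mathbb{R}^{n_x}$, $P_a$ a covariance matrix, $\mu>0$, $\Delta t_k>0$. Let $m(t),P(t)$ solve $\frac{dm}{dt}=f(m)$, $\frac{dP}{dt}=PF_x^T(m)+F_x(m)P+L(m)QL^T(m)$ with $m(0)=\overline{x}_a$, $P(0)=P_a$, and take the conditional mean and covariance of a target born with time lag $t$ to be $\mathrm{E}[x_k|t]=m(t)$, $\mathrm{C}[x_k|t]=P(t)$. Let the lag $T$ have density $\frac{\mu}{1-e^{-\mu\Delta t_k}}e^{-\mu t}\chi_{[0,\Delta t_k)}(t)$ and define the mean and covariance at the time of birth by $\overline{x}_{b,k}=\mathrm{E}[\mathrm{E}[x_k|T]]$ and $P_{b,k}=\mathrm{C}[\mathrm{E}[x_k|T]]+\mathrm{E}[\mathrm{C}[x_k|T]]$. Then $$\overline{x}_{b,k}=\frac{\mu}{1-e^{-\mu\Delta t_k}}\overline{x}(\Delta t_k),\qquad P_{b,k}=\frac{\mu}{1-e^{-\mu\Delta t_k}}\Sigma(\Delta t_k)-\overline{x}_{b,k}\overline{x}_{b,k}^T,$$ where $\overline{x}(\cdot),\Sigma(\cdot)$ are obtained by solving jointly, from $t=0$ to $\Delta t_k$, the ODE system $\frac{dm}{dt}=f(m)$, $\frac{dP}{dt}=PF_x^T(m)+F_x(m)P+L(m)QL^T(m)$,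 $\frac{d\overline{x}}{dt}=m\,e^{-\mu t}$, $\frac{d\Sigma}{dt}=[P+mm^T]e^{-\mu t}$, with initial conditions $m(0)=\overline{x}_a$, $P(0)=P_a$, $\overline{x}(0)=0$, $\Sigma(0)=0$.
   Context: Setting: targets appear according to a Poisson process in time, with state distributed $\mathcal{N}(\overline{x}_a,P_a)$ at appearance, have exponential life spans with rate $\mu$, and move according to the nonlinear time-invariant SDE $dx=f(x)dt+L(x)d\beta$, with $\beta$ Brownian motion with diffusion matrix $Q$. The moment ODEs for $m,P$ result from the approximations $f(x)\approx f(m)+F_x(m)(x-m)$ and $L(x)\approx L(m)$. A target born at time step $k$ ($\Delta t_k=t_k-t_{k-1}$) appeared with lag $T\in[0,\Delta t_k)$ having the truncated exponential density above; $\chi_{[0,\Delta t_k)}$ is the indicator function. *)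

theory Defs
  imports "HOL-Probability.Probability"
begin

definition outer :: "real^'n \<Rightarrow> real^'n \<Rightarrow> real^'n^'n" where
  "outer v w = (\<chi> i j. v $ i * w $ j)"

definition lag_density :: "real \<Rightarrow> real \<Rightarrow> real \<Rightarrow> real" where
  "lag_density mu dt t = mu / (1 - exp (- mu * dt)) * exp (- mu * t) * indicator {0..<dt} t"

definition lag_distr :: "real \<Rightarrow> real \<Rightarrow> real measure" where
  "lag_distr mu dt = density lborel (\<lambda>t. ennreal (lag_density mu dt t))"

text \<open>E[g(T)]; T lies in [0,dt) almost surely, so integrating over that set is the full expectation.\<close>
definition lag_expect :: "real \<Rightarrow> real \<Rightarrow> (real \<Rightarrow> 'a::{banach,second_countable_topology}) \<Rightarrow> 'a" where
  "lag_expect mu dt g = (LINT t:{0..<dt}|lag_distr mu dt. g t)"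

definition lag_cov :: "real \<Rightarrow> real \<Rightarrow> (real \<Rightarrow> real^'n) \<Rightarrow> real^'n^'n" where
  "lag_cov mu dt g = lag_expect mu dt (\<lambda>t. outer (g t - lag_expect mu dt g) (g t - lag_expect mu dt g))"

end

theory Submission
  imports Defs
begin

(*
  On [0, dt) the lag T has density c e^(-mu t) with c = mu / (1 - e^(-mu dt)), so for
  continuous g the expectation E[g(T)] is c times the integral of e^(-mu t) g(t) over
  [0, dt]. This integral is exactly what the augmented ODEs for xbar and Sigma
  accumulate, giving E[m(T)] = c xbar(dt) and E[P(T) + m(T) m(T)^T] = c Sigma(dt).
  The covariance claim then follows from linearity of the expectation and
  C[m(T)] = E[m(T) m(T)^T] - E[m(T)] E[m(T)]^T.
*)

lemma bounded_bilinear_outer: "bounded_bilinear outer"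
  unfolding bilinear_conv_bounded_bilinear[symmetric]
  by (auto simp: bilinear_def outer_def vec_eq_iff algebra_simps intro!: linearI)

lemmas continuous_on_outer [continuous_intros] =
  bounded_bilinear.continuous_on[OF bounded_bilinear_outer]

lemma outer_diff_outer_diff:
  "outer (x - a) (x - a) = outer x x - outer a x - outer (x - a) a"
  by (auto simp: outer_def vec_eq_iff algebra_simps)

context
  fixes mu dt :: real
  assumes mu_pos: "mu > 0" and dt_pos: "dt > 0"
begin

lemma lag_expect_eq_integral:
  fixes g :: "real \<Rightarrow> 'a::euclidean_space"
  assumes g: "continuous_on {0..dt} g"
  shows "lag_expect mu dt g
    = (mu / (1 - exp (- mu * dt))) *\<^sub>R integral {0..dt} (\<lambda>t. exp (- mu * t) *\<^sub>R g t)"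
proof -
  define c where "c = mu / (1 - exp (- mu * dt))"
  define S where "S = {0..<dt}"
  have "exp (- mu * dt) < 1"
    using mu_pos dt_pos by simp
  then have density_nonneg: "AE t in lborel. 0 \<le> lag_density mu dt t"
    unfolding lag_density_def using mu_pos by (auto simp: indicator_def)
  have g_S: "continuous_on S g"
    using g unfolding S_def by (rule continuous_on_subset) auto
  have meas: "(\<lambda>t. indicator S t *\<^sub>R g t) \<in> borel_measurable lborel"
    using borel_measurable_continuous_on_indicator[OF _ g_S] unfolding S_def by simp
  have cont: "continuous_on {0..dt} (\<lambda>t. (c * exp (- mu * t)) *\<^sub>R g t)"
    by (intro continuous_intros g)
  have "lag_expect mu dt g = integral\<^sup>L (lag_distr mu dt) (\<lambda>t. indicator S t *\<^sub>R g t)"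
    unfolding lag_expect_def set_lebesgue_integral_def S_def ..
  also have "\<dots> = integral\<^sup>L lborel (\<lambda>t. lag_density mu dt t *\<^sub>R (indicator S t *\<^sub>R g t))"
    unfolding lag_distr_def
    by (rule integral_density[OF meas _ density_nonneg]) (simp add: lag_density_def)
  also have "\<dots> = (LINT t:S|lborel. (c * exp (- mu * t)) *\<^sub>R g t)"
    unfolding set_lebesgue_integral_def
    by (rule Bochner_Integration.integral_cong)
       (auto simp: lag_density_def c_def S_def indicator_def)
  also have "\<dots> = integral S (\<lambda>t. (c * exp (- mu * t)) *\<^sub>R g t)"
    using borel_integrable_atLeastAtMost'[OF cont]
    by (intro set_borel_integral_eq_integral, rule set_integrable_subset) (auto simp: S_def)
  also have "\<dots> = integral {0..dt} (\<lambda>t. (c * exp (- mu * t)) *\<^sub>R g t)"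
    by (rule integral_spike_set) (auto simp: S_def intro: negligible_subset[of "{dt}"])
  also have "\<dots> = c *\<^sub>R integral {0..dt} (\<lambda>t. exp (- mu * t) *\<^sub>R g t)"
    by (subst scaleR_scaleR[symmetric]) (rule integral_cmul)
  finally show ?thesis
    unfolding c_def .
qed

lemma lag_expect_const:
  fixes v :: "'a::euclidean_space"
  shows "lag_expect mu dt (\<lambda>_. v) = v"
proof -
  have "exp (- mu * dt) < 1"
    using mu_pos dt_pos by simp
  have "((\<lambda>t. - exp (- mu * t) / mu) has_vector_derivative exp (- mu * t)) (at t within {0..dt})"
    for t
    unfolding has_real_derivative_iff_has_vector_derivative[symmetric]
    using mu_pos by (auto intro!: derivative_eq_intros simp: field_simps)
  from fundamental_theorem_of_calculus[of 0 dt _ "\<lambda>t. exp (- mu * t)", OF _ this]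
  have "((\<lambda>t. exp (- mu * t)) has_integral (1 - exp (- mu * dt)) / mu) {0..dt}"
    using dt_pos mu_pos by (simp add: field_simps)
  then have "integral {0..dt} (\<lambda>t. exp (- mu * t) *\<^sub>R v) = ((1 - exp (- mu * dt)) / mu) *\<^sub>R v"
    by (rule integral_unique[OF has_integral_scaleR_left])
  then show ?thesis
    using \<open>exp (- mu * dt) < 1\<close> mu_pos dt_pos by (simp add: lag_expect_eq_integral)
qed

lemma lag_expect_add:
  fixes g h :: "real \<Rightarrow> 'a::euclidean_space"
  assumes "continuous_on {0..dt} g" "continuous_on {0..dt} h"
  shows "lag_expect mu dt (\<lambda>t. g t + h t) = lag_expect mu dt g + lag_expect mu dt h"
proof -
  have "integral {0..dt} (\<lambda>t. exp (- mu * t) *\<^sub>R (g t + h t))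
      = integral {0..dt} (\<lambda>t. exp (- mu * t) *\<^sub>R g t)
        + integral {0..dt} (\<lambda>t. exp (- mu * t) *\<^sub>R h t)"
    unfolding scaleR_add_right using assms
    by (intro integral_add integrable_continuous_interval continuous_intros)
  then show ?thesis
    using assms by (simp add: lag_expect_eq_integral continuous_on_add scaleR_add_right)
qed

lemma lag_expect_diff:
  fixes g h :: "real \<Rightarrow> 'a::euclidean_space"
  assumes "continuous_on {0..dt} g" "continuous_on {0..dt} h"
  shows "lag_expect mu dt (\<lambda>t. g t - h t) = lag_expect mu dt g - lag_expect mu dt h"
proof -
  have "integral {0..dt} (\<lambda>t. exp (- mu * t) *\<^sub>R (g t - h t))
      = integral {0..dt} (\<lambda>t. exp (- mu * t) *\<^sub>R g t)
        - integral {0..dt} (\<lambda>t. exp (- mu * t) *\<^sub>R h t)"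
    unfolding scaleR_diff_right using assms
    by (intro integral_diff integrable_continuous_interval continuous_intros)
  then show ?thesis
    using assms by (simp add: lag_expect_eq_integral continuous_on_diff scaleR_diff_right)
qed

lemma lag_expect_bounded_linear:
  fixes g :: "real \<Rightarrow> 'a::euclidean_space" and h :: "'a \<Rightarrow> 'b::euclidean_space"
  assumes h: "bounded_linear h" and g: "continuous_on {0..dt} g"
  shows "lag_expect mu dt (\<lambda>t. h (g t)) = h (lag_expect mu dt g)"
proof -
  have "(\<lambda>t. exp (- mu * t) *\<^sub>R g t) integrable_on {0..dt}"
    by (intro integrable_continuous_interval continuous_intros g)
  from integral_linear[OF this h]
  have "integral {0..dt} (\<lambda>t. exp (- mu * t) *\<^sub>R h (g t))
      = h (integral {0..dt} (\<lambda>t. exp (- mu * t) *\<^sub>R g t))"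
    by (simp add: comp_def linear_scale[OF bounded_linear.linear[OF h]])
  then show ?thesis
    using bounded_linear.continuous_on[OF h g]
    by (simp add: lag_expect_eq_integral g linear_scale[OF bounded_linear.linear[OF h]])
qed

lemma lag_expect_eq_ode_solution:
  fixes g y :: "real \<Rightarrow> 'a::euclidean_space"
  assumes g: "continuous_on {0..dt} g"
    and y_ode: "\<And>t. t \<in> {0..dt} \<Longrightarrow>
      (y has_vector_derivative exp (- mu * t) *\<^sub>R g t) (at t within {0..dt})"
    and y_init: "y 0 = 0"
  shows "lag_expect mu dt g = (mu / (1 - exp (- mu * dt))) *\<^sub>R y dt"
  using fundamental_theorem_of_calculus[of 0 dt y, OF _ y_ode] dt_pos y_init
  by (simp add: lag_expect_eq_integral g integral_unique)

lemma lag_cov_eq_expect_outer: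
  fixes g :: "real \<Rightarrow> real^'n"
  assumes g: "continuous_on {0..dt} g"
  shows "lag_cov mu dt g
    = lag_expect mu dt (\<lambda>t. outer (g t) (g t)) - outer (lag_expect mu dt g) (lag_expect mu dt g)"
proof -
  define a where "a = lag_expect mu dt g"
  have g_a: "continuous_on {0..dt} (\<lambda>t. g t - a)"
    using g by (intro continuous_intros)
  have "lag_expect mu dt (\<lambda>t. outer a (g t)) = outer a a"
    unfolding a_def using g
    by (intro lag_expect_bounded_linear bounded_bilinear.bounded_linear_right[OF bounded_bilinear_outer])
  moreover have "lag_expect mu dt (\<lambda>t. outer (g t - a) a) = 0"
  proof -
    have "lag_expect mu dt (\<lambda>t. g t - a) = 0"
      using g by (simp add: lag_expect_diff lag_expect_const a_def)
    then show ?thesis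
      using lag_expect_bounded_linear[OF bounded_bilinear.bounded_linear_left[OF bounded_bilinear_outer] g_a]
      by (simp add: bounded_bilinear.zero_left[OF bounded_bilinear_outer])
  qed
  moreover have "lag_cov mu dt g = lag_expect mu dt (\<lambda>t. outer (g t) (g t))
      - lag_expect mu dt (\<lambda>t. outer a (g t)) - lag_expect mu dt (\<lambda>t. outer (g t - a) a)"
    unfolding lag_cov_def a_def[symmetric] outer_diff_outer_diff
    using g g_a by (simp add: lag_expect_diff continuous_intros)
  ultimately show ?thesis
    unfolding a_def by simp
qed

end

theorem proposition8:
  fixes f :: "real^'n \<Rightarrow> real^'n"
    and Fx :: "real^'n \<Rightarrow> real^'n^'n"
    and L :: "real^'n \<Rightarrow> real^'b^'n"
    and Q :: "real^'b^'b"
    and xa :: "real^'n" and Pa :: "real^'n^'n"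
    and mu dt :: real
    and m xbar :: "real \<Rightarrow> real^'n"
    and P Sigma :: "real \<Rightarrow> real^'n^'n"
  assumes f_deriv: "\<And>x. (f has_derivative (\<lambda>h. Fx x *v h)) (at x)"
    and Q_sym: "transpose Q = Q" and Q_psd: "\<And>v. 0 \<le> v \<bullet> (Q *v v)"
    and Pa_sym: "transpose Pa = Pa" and Pa_psd: "\<And>v. 0 \<le> v \<bullet> (Pa *v v)"
    and mu_pos: "mu > 0" and dt_pos: "dt > 0"
    and m_ode: "\<And>t. t \<in> {0..dt} \<Longrightarrow> (m has_vector_derivative f (m t)) (at t within {0..dt})"
    and P_ode: "\<And>t. t \<in> {0..dt} \<Longrightarrow> (P has_vector_derivative
        (P t ** transpose (Fx (m t)) + Fx (m t) ** P t + L (m t) ** Q ** transpose (L (m t))))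
        (at t within {0..dt})"
    and xbar_ode: "\<And>t. t \<in> {0..dt} \<Longrightarrow> (xbar has_vector_derivative exp (- mu * t) *\<^sub>R m t)
        (at t within {0..dt})"
    and Sigma_ode: "\<And>t. t \<in> {0..dt} \<Longrightarrow> (Sigma has_vector_derivative
        exp (- mu * t) *\<^sub>R (P t + outer (m t) (m t))) (at t within {0..dt})"
    and m_init: "m 0 = xa" and P_init: "P 0 = Pa"
    and xbar_init: "xbar 0 = 0" and Sigma_init: "Sigma 0 = 0"
  shows "lag_expect mu dt m = (mu / (1 - exp (- mu * dt))) *\<^sub>R xbar dt
    \<and> lag_cov mu dt m + lag_expect mu dt P
        = (mu / (1 - exp (- mu * dt))) *\<^sub>R Sigma dt - outer (lag_expect mu dt m) (lag_expect mu dt m)"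
proof
  have m_cont: "continuous_on {0..dt} m"
    using m_ode by (rule continuous_on_vector_derivative)
  have P_cont: "continuous_on {0..dt} P"
    using P_ode by (rule continuous_on_vector_derivative)
  have mm_cont: "continuous_on {0..dt} (\<lambda>t. outer (m t) (m t))"
    using m_cont by (intro continuous_intros)
  show "lag_expect mu dt m = (mu / (1 - exp (- mu * dt))) *\<^sub>R xbar dt"
    using mu_pos dt_pos m_cont xbar_ode xbar_init by (rule lag_expect_eq_ode_solution)
  have "lag_expect mu dt P + lag_expect mu dt (\<lambda>t. outer (m t) (m t))
      = (mu / (1 - exp (- mu * dt))) *\<^sub>R Sigma dt"
    using lag_expect_add[OF mu_pos dt_pos P_cont mm_cont]
      lag_expect_eq_ode_solution[OF mu_pos dt_pos continuous_on_add[OF P_cont mm_cont] Sigma_ode Sigma_init]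
    by simp
  then show "lag_cov mu dt m + lag_expect mu dt P
      = (mu / (1 - exp (- mu * dt))) *\<^sub>R Sigma dt - outer (lag_expect mu dt m) (lag_expect mu dt m)"
    unfolding lag_cov_eq_expect_outer[OF mu_pos dt_pos m_cont] by (simp add: diff_add_eq add.commute)
qed

end
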